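(* Under the hypotheses $\frac{d\lambda}{dt}=\alpha_0\lambda$ ($\alpha_0\ne0$) and $\frac{d}{dt}m_j=\alpha_0jm_j+\alpha_1m_{j+1}+\alpha_2m_{j-1}$ for all $j\in\mathbb Z$, with all required inverses existing, the recurrence coefficients satisfy the noncommutative nonisospectral mixed relativistic Toda lattice: $$\frac{d}{dt}a_n=\alpha_0a_n+\alpha_1(-a_{n+1}a_n+a_na_{n-1}+b_na_n-a_nb_{n-1})+\alpha_2(b_n^{-1}a_n-a_nb_{n-1}^{-1}),$$ $$\frac{d}{dt}b_n=\alpha_0b_n+\alpha_1(b_na_n-a_{n+1}b_n)+\alpha_2(b_{n+1}^{-1}a_{n+1}-a_nb_{n-1}^{-1}).$$ The boundary conventions are $a_0=0$ and $P_{-1}=0$.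
   Context: $R$ is a skew field containing moments $m_i(t)$, $i\in\mathbb Z$, with an involution $*$ and a derivation $\frac{d}{dt}$. The pairing is $\langle\sum a_i\lambda^i,\sum b_j\lambda^j\rangle=\sum a_im_{i-j}b_j^*$. Let $\Lambda_{n-1}=(m_{i-j})_{i,j=0}^{n-1}$ (invertible) and $\theta_n=(m_n,\dots,m_1)$. The polynomials are $P_n=\lambda^n-\theta_n\Lambda_{n-1}^{-1}(1,\dots,\lambda^{n-1})^T$, the monic Laurent biorthogonal polynomials. Further, $$H_n=m_0-\theta_n\Lambda_{n-1}^{-1}(m_{-n},\dots,m_{-1})^T,\qquad \tau_n=m_{n+1}-\theta_n\Lambda_{n-1}^{-1}(m_1,\dots,m_n)^T,$$ $$a_n=-\tau_n\tau_{n-1}^{-1},\qquad b_n=a_nH_{n-1}H_n^{-1}.$$ The recurrence coefficients satisfy $\lambda(P_n+a_nP_{n-1})=P_{n+1}+b_nP_n$. The spectral parameter $\lambda=\lambda(t)$ is time-dependent. *)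

theory Defs
  imports Main
begin

text \<open>Abstract setting: a skew field (type class division_ring) carrying a derivation D
  (playing the role of d/dt). Square matrices of size n are
  functions nat => nat => 'a, only entries with indices < n matter.\<close>

definition derivation :: "('a::ring_1 \<Rightarrow> 'a) \<Rightarrow> bool" where
  "derivation D \<longleftrightarrow> (\<forall>x y. D (x + y) = D x + D y) \<and> (\<forall>x y. D (x * y) = D x * y + x * D y)"

definition mat_mult :: "nat \<Rightarrow> (nat \<Rightarrow> nat \<Rightarrow> 'a::ring_1) \<Rightarrow> (nat \<Rightarrow> nat \<Rightarrow> 'a) \<Rightarrow> nat \<Rightarrow> nat \<Rightarrow> 'a" where
  "mat_mult n A B = (\<lambda>i j. \<Sum>k<n. A i k * B k j)"

definition is_inverse_mat :: "nat \<Rightarrow> (nat \<Rightarrow> nat \<Rightarrow> 'a::ring_1) \<Rightarrow> (nat \<Rightarrow> nat \<Rightarrow> 'a) \<Rightarrow> bool" where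
  "is_inverse_mat n A B \<longleftrightarrow> (\<forall>i<n. \<forall>j<n.
      mat_mult n A B i j = (if i = j then 1 else 0) \<and> mat_mult n B A i j = (if i = j then 1 else 0))"

definition mat_invertible :: "nat \<Rightarrow> (nat \<Rightarrow> nat \<Rightarrow> 'a::ring_1) \<Rightarrow> bool" where
  "mat_invertible n A \<longleftrightarrow> (\<exists>B. is_inverse_mat n A B)"

definition mat_inverse :: "nat \<Rightarrow> (nat \<Rightarrow> nat \<Rightarrow> 'a::ring_1) \<Rightarrow> nat \<Rightarrow> nat \<Rightarrow> 'a" where
  "mat_inverse n A = (SOME B. is_inverse_mat n A B)"

text \<open>moment_matrix m n is Lambda_(n-1) = (m_(i-j))_(i,j=0..n-1), an n x n matrix.\<close>
definition moment_matrix :: "(int \<Rightarrow> 'a::ring_1) \<Rightarrow> nat \<Rightarrow> nat \<Rightarrow> nat \<Rightarrow> 'a" where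
  "moment_matrix m n = (\<lambda>i j. m (int i - int j))"

text \<open>theta_n Lambda_(n-1)^(-1) v^T, where theta_n = (m_n, ..., m_1), i.e. entry k is m_(n-k).\<close>
definition theta_quad :: "(int \<Rightarrow> 'a::ring_1) \<Rightarrow> nat \<Rightarrow> (nat \<Rightarrow> 'a) \<Rightarrow> 'a" where
  "theta_quad m n v = (\<Sum>i<n. \<Sum>j<n. m (int n - int i) * mat_inverse n (moment_matrix m n) i j * v j)"

definition Hn :: "(int \<Rightarrow> 'a::ring_1) \<Rightarrow> nat \<Rightarrow> 'a" where
  "Hn m n = m 0 - theta_quad m n (\<lambda>j. m (int j - int n))"

definition taun :: "(int \<Rightarrow> 'a::ring_1) \<Rightarrow> nat \<Rightarrow> 'a" where
  "taun m n = m (int n + 1) - theta_quad m n (\<lambda>j. m (int j + 1))"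

definition an :: "(int \<Rightarrow> 'a::division_ring) \<Rightarrow> nat \<Rightarrow> 'a" where
  "an m n = (if n = 0 then 0 else - (taun m n * inverse (taun m (n - 1))))"

text \<open>b_n = a_n H_(n-1) H_n^(-1) for n >= 1; b_0 = m_1 m_0^(-1) is forced by the recurrence
  lambda P_0 = P_1 + b_0 P_0 with P_(-1) = 0.\<close>
definition bn :: "(int \<Rightarrow> 'a::division_ring) \<Rightarrow> nat \<Rightarrow> 'a" where
  "bn m n = (if n = 0 then m 1 * inverse (m 0) else an m n * Hn m (n - 1) * inverse (Hn m n))"

end

theory Submission
  imports Defs
begin

text \<open>A Laurent polynomial supported in degrees \<open>0, \<dots>, n - 1\<close> and orthogonal to
  \<open>\<lambda>\<^sup>0, \<dots>, \<lambda>\<^sup>n\<^sup>-\<^sup>1\<close> vanishes, because \<open>\<Lambda>\<^sub>n\<^sub>-\<^sub>1\<close> is invertible. This gives both the recurrence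
  \<open>\<lambda>(P\<^sub>n + a\<^sub>n P\<^sub>n\<^sub>-\<^sub>1) = P\<^sub>n\<^sub>+\<^sub>1 + b\<^sub>n P\<^sub>n\<close> and an explicit time evolution of \<open>P\<^sub>n\<close> in terms of
  \<open>P\<^sub>n\<close>, \<open>\<lambda>\<^sup>\<plusminus>\<^sup>1P\<^sub>n\<close> and \<open>P\<^sub>n\<^sub>+\<^sub>1\<close>: in each case the difference of the two sides is such a
  polynomial, its boundary coefficients being cancelled by the choice of \<open>a\<^sub>n\<close> and \<open>b\<^sub>n\<close>. Pairing
  the evolution with \<open>\<lambda>\<^sup>-\<^sup>1\<close> and \<open>\<lambda>\<^sup>n\<close> gives the derivatives of \<open>\<tau>\<^sub>n\<close> and \<open>H\<^sub>n\<close>, and the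
  lattice follows by differentiating \<open>a\<^sub>n \<tau>\<^sub>n\<^sub>-\<^sub>1 = -\<tau>\<^sub>n\<close> and \<open>b\<^sub>n H\<^sub>n = a\<^sub>n H\<^sub>n\<^sub>-\<^sub>1\<close>.\<close>

lemma inverse_mult_cancel_left: "(x::'a::division_ring) \<noteq> 0 \<Longrightarrow> inverse x * (x * y) = y"
  by (simp flip: mult.assoc)

lemma mult_inverse_cancel_left: "(x::'a::division_ring) \<noteq> 0 \<Longrightarrow> x * (inverse x * y) = y"
  by (simp flip: mult.assoc)

lemma is_inverse_mat_mat_inverse:
  assumes "mat_invertible n A"
  shows "is_inverse_mat n A (mat_inverse n A)"
  using assms unfolding mat_invertible_def mat_inverse_def by (rule someI_ex)

definition theta_Lambda_inv :: "(int \<Rightarrow> 'a::ring_1) \<Rightarrow> nat \<Rightarrow> nat \<Rightarrow> 'a" where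
  "theta_Lambda_inv m j l = (\<Sum>r<j. m (int j - int r) * mat_inverse j (moment_matrix m j) r l)"

lemma theta_quad_eq: "theta_quad m j v = (\<Sum>l<j. theta_Lambda_inv m j l * v l)"
  unfolding theta_quad_def theta_Lambda_inv_def sum_distrib_right by (rule sum.swap)

lemma theta_Lambda_inv_moment:
  assumes inv: "mat_invertible j (moment_matrix m j)" and k: "k < j"
  shows "(\<Sum>l<j. theta_Lambda_inv m j l * m (int l - int k)) = m (int j - int k)"
proof -
  let ?B = "mat_inverse j (moment_matrix m j)"
  have B_Lambda: "(\<Sum>l<j. ?B r l * m (int l - int k)) = (if r = k then 1 else 0)" if "r < j" for r
  proof -
    have "mat_mult j ?B (moment_matrix m j) r k = (if r = k then 1 else 0)"
      using is_inverse_mat_mat_inverse[OF inv] that k unfolding is_inverse_mat_def by blast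
    then show ?thesis unfolding mat_mult_def moment_matrix_def by simp
  qed
  have "(\<Sum>l<j. theta_Lambda_inv m j l * m (int l - int k))
      = (\<Sum>r<j. m (int j - int r) * (\<Sum>l<j. ?B r l * m (int l - int k)))"
    unfolding theta_Lambda_inv_def sum_distrib_right sum_distrib_left
    by (subst sum.swap) (simp add: mult.assoc)
  also have "\<dots> = (\<Sum>r<j. m (int j - int r) * (if r = k then 1 else 0))"
    by (rule sum.cong) (simp_all add: B_Lambda)
  also have "\<dots> = m (int j - int k)"
    using k by (simp add: if_distrib cong: if_cong)
  finally show ?thesis .
qed

lemma moment_orthogonal_imp_zero:
  assumes inv: "mat_invertible s (moment_matrix m s)"
    and orth: "\<And>k. k < s \<Longrightarrow> (\<Sum>l<s. f l * m (int l - int k)) = 0"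
    and "l' < s"
  shows "f l' = 0"
proof -
  let ?B = "mat_inverse s (moment_matrix m s)"
  have Lambda_B: "(\<Sum>k<s. m (int l - int k) * ?B k l') = (if l = l' then 1 else 0)"
    if "l < s" for l
  proof -
    have "mat_mult s (moment_matrix m s) ?B l l' = (if l = l' then 1 else 0)"
      using is_inverse_mat_mat_inverse[OF inv] that \<open>l' < s\<close> unfolding is_inverse_mat_def by blast
    then show ?thesis unfolding mat_mult_def moment_matrix_def by simp
  qed
  have "f l' = (\<Sum>l<s. f l * (if l = l' then 1 else 0))"
    using \<open>l' < s\<close> by (simp add: if_distrib cong: if_cong)
  also have "\<dots> = (\<Sum>l<s. f l * (\<Sum>k<s. m (int l - int k) * ?B k l'))"
    by (rule sum.cong) (simp_all add: Lambda_B)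
  also have "\<dots> = (\<Sum>k<s. (\<Sum>l<s. f l * m (int l - int k)) * ?B k l')"
    unfolding sum_distrib_left sum_distrib_right by (subst sum.swap) (simp add: mult.assoc)
  also have "\<dots> = 0"
    using orth by simp
  finally show ?thesis .
qed

text \<open>A Laurent polynomial \<open>\<Sum> f i \<lambda>\<^sup>i\<close> is represented by its coefficient function \<open>f\<close>;
  \<open>lbp_coeff m j\<close> is \<open>P\<^sub>j\<close>, and \<open>moment_pairing m w f k\<close> is \<open>\<langle>f, \<lambda>\<^sup>k\<rangle>\<close> for \<open>f\<close> supported
  in \<open>[-1, w]\<close>.\<close>

definition lbp_coeff :: "(int \<Rightarrow> 'a::ring_1) \<Rightarrow> nat \<Rightarrow> int \<Rightarrow> 'a" where
  "lbp_coeff m j i =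
    (if i = int j then 1 else if 0 \<le> i \<and> i < int j then - theta_Lambda_inv m j (nat i) else 0)"

definition moment_pairing :: "(int \<Rightarrow> 'a::ring_1) \<Rightarrow> int \<Rightarrow> (int \<Rightarrow> 'a) \<Rightarrow> int \<Rightarrow> 'a" where
  "moment_pairing m w f k = (\<Sum>i\<in>{-1..w}. f i * m (i - k))"

definition lbp_pairing :: "(int \<Rightarrow> 'a::ring_1) \<Rightarrow> nat \<Rightarrow> int \<Rightarrow> 'a" where
  "lbp_pairing m j k = m (int j - k) - (\<Sum>l<j. theta_Lambda_inv m j l * m (int l - k))"

lemma lbp_coeff_eq_0: "i < 0 \<or> i > int j \<Longrightarrow> lbp_coeff m j i = 0"
  unfolding lbp_coeff_def by auto

lemma lbp_coeff_leading [simp]: "i = int j \<Longrightarrow> lbp_coeff m j i = 1"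
  unfolding lbp_coeff_def by simp

lemma moment_pairing_eq_sum:
  assumes "\<And>i. i < 0 \<or> i \<ge> int s \<Longrightarrow> f i = 0" and "int s \<le> w + 1"
  shows "moment_pairing m w f k = (\<Sum>l<s. f (int l) * m (int l - k))"
proof -
  have "moment_pairing m w f k = (\<Sum>i\<in>{0..<int s}. f i * m (i - k))"
    unfolding moment_pairing_def by (rule sum.mono_neutral_right) (use assms in auto)
  also have "\<dots> = (\<Sum>l<s. f (int l) * m (int l - k))"
    by (rule sum.reindex_bij_witness[of _ int nat]) auto
  finally show ?thesis .
qed

lemma moment_pairing_orthogonal_imp_zero:
  assumes inv: "mat_invertible s (moment_matrix m s)"
    and support: "\<And>i. i < 0 \<or> i \<ge> int s \<Longrightarrow> f i = 0" and window: "int s \<le> w + 1"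
    and orth: "\<And>k. k < s \<Longrightarrow> moment_pairing m w f (int k) = 0"
  shows "f i = 0"
proof (cases "i < 0 \<or> i \<ge> int s")
  case False
  have "f (int (nat i)) = 0"
    using moment_orthogonal_imp_zero[OF inv, of "\<lambda>l. f (int l)" "nat i"] False orth
    by (simp add: moment_pairing_eq_sum[OF support window] nat_less_iff)
  with False show ?thesis
    by simp
qed (rule support)

lemma moment_pairing_times_lambda:
  assumes "f (-2) = 0" "f w = 0"
  shows "moment_pairing m w (\<lambda>i. f (i - 1)) k = moment_pairing m w f (k - 1)"
proof -
  have "moment_pairing m w (\<lambda>i. f (i - 1)) k = (\<Sum>i\<in>{-2..w-1}. f i * m (i - (k - 1)))"
    unfolding moment_pairing_def
    by (rule sum.reindex_bij_witness[of _ "\<lambda>i. i + 1" "\<lambda>i. i - 1"]) (auto simp: algebra_simps)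
  also have "\<dots> = (\<Sum>i\<in>{-2..w}. f i * m (i - (k - 1)))"
    by (rule sum.mono_neutral_left) (auto, auto simp: assms le_less)
  also have "\<dots> = moment_pairing m w f (k - 1)"
    unfolding moment_pairing_def by (rule sum.mono_neutral_right) (auto, auto simp: assms le_less)
  finally show ?thesis .
qed

lemma moment_pairing_times_inverse_lambda:
  assumes "f (-1) = 0" "f (w + 1) = 0"
  shows "moment_pairing m w (\<lambda>i. f (i + 1)) k = moment_pairing m w f (k + 1)"
proof -
  have "moment_pairing m w (\<lambda>i. f (i + 1)) k = (\<Sum>i\<in>{0..w+1}. f i * m (i - (k + 1)))"
    unfolding moment_pairing_def
    by (rule sum.reindex_bij_witness[of _ "\<lambda>i. i - 1" "\<lambda>i. i + 1"]) (auto simp: algebra_simps)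
  also have "\<dots> = (\<Sum>i\<in>{-1..w+1}. f i * m (i - (k + 1)))"
    by (rule sum.mono_neutral_left) (auto, auto simp: assms le_less)
  also have "\<dots> = moment_pairing m w f (k + 1)"
    unfolding moment_pairing_def by (rule sum.mono_neutral_right) (auto, auto simp: assms le_less)
  finally show ?thesis .
qed

lemma moment_pairing_add:
  "moment_pairing m w (\<lambda>i. f i + g i) k = moment_pairing m w f k + moment_pairing m w g k"
  unfolding moment_pairing_def by (simp add: distrib_right sum.distrib)

lemma moment_pairing_diff:
  "moment_pairing m w (\<lambda>i. f i - g i) k = moment_pairing m w f k - moment_pairing m w g k"
  unfolding moment_pairing_def by (simp add: left_diff_distrib sum_subtractf)

lemma moment_pairing_scale: "moment_pairing m w (\<lambda>i. c * f i) k = c * moment_pairing m w f k"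
  unfolding moment_pairing_def by (simp add: sum_distrib_left mult.assoc)

lemma moment_pairing_zero [simp]: "moment_pairing m w (\<lambda>i. 0) k = 0"
  unfolding moment_pairing_def by simp

lemma moment_pairing_lbp:
  assumes "int j \<le> w"
  shows "moment_pairing m w (lbp_coeff m j) k = lbp_pairing m j k"
proof -
  have "moment_pairing m w (lbp_coeff m j) k = (\<Sum>l<Suc j. lbp_coeff m j (int l) * m (int l - k))"
    by (rule moment_pairing_eq_sum) (use assms in \<open>auto simp: lbp_coeff_eq_0\<close>)
  also have "\<dots> = (\<Sum>l<j. - (theta_Lambda_inv m j l * m (int l - k))) + m (int j - k)"
    by (simp add: lbp_coeff_def)
  finally show ?thesis
    unfolding lbp_pairing_def by (simp add: sum_negf)
qed

lemma lbp_pairing_orthogonal: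
  "mat_invertible j (moment_matrix m j) \<Longrightarrow> k < j \<Longrightarrow> lbp_pairing m j (int k) = 0"
  unfolding lbp_pairing_def by (simp add: theta_Lambda_inv_moment)

lemma lbp_pairing_self: "lbp_pairing m j (int j) = Hn m j"
  unfolding lbp_pairing_def Hn_def theta_quad_eq by simp

lemma lbp_pairing_minus_one: "lbp_pairing m j (-1) = taun m j"
  unfolding lbp_pairing_def taun_def theta_quad_eq by simp

lemma Hn_0: "Hn m 0 = m 0" and taun_0: "taun m 0 = m 1"
  unfolding Hn_def taun_def theta_quad_def by simp_all

definition lbp_regular :: "(int \<Rightarrow> 'a::ring_1) \<Rightarrow> nat \<Rightarrow> bool" where
  "lbp_regular m n \<longleftrightarrow> (\<forall>k\<le>n. mat_invertible k (moment_matrix m k) \<and> taun m k \<noteq> 0 \<and> Hn m k \<noteq> 0)"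

lemma lbp_regular_mono: "lbp_regular m n \<Longrightarrow> k \<le> n \<Longrightarrow> lbp_regular m k"
  unfolding lbp_regular_def by simp

lemma an_0 [simp]: "an m 0 = 0"
  unfolding an_def by simp

lemma bn_nonzero:
  fixes m :: "int \<Rightarrow> 'a::division_ring"
  assumes "lbp_regular m j"
  shows "bn m j \<noteq> 0"
proof (cases j)
  case 0
  then show ?thesis
    using assms Hn_0[of m] taun_0[of m] by (simp add: lbp_regular_def bn_def)
next
  case (Suc p)
  then show ?thesis
    using assms by (simp add: lbp_regular_def bn_def an_def)
qed

lemma lbp_pairing_recurrence:
  fixes m :: "int \<Rightarrow> 'a::division_ring"
  assumes reg: "lbp_regular m (Suc j)" and "k \<le> j"
  shows "lbp_pairing m j (int k - 1) + an m j * lbp_pairing m (j - 1) (int k - 1)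
       = lbp_pairing m (Suc j) (int k) + bn m j * lbp_pairing m j (int k)"
proof -
  have inv: "mat_invertible i (moment_matrix m i)" and tau: "taun m i \<noteq> 0" and H: "Hn m i \<noteq> 0"
    if "i \<le> Suc j" for i
    using reg that by (auto simp: lbp_regular_def)
  have orth: "lbp_pairing m i (int k') = 0" if "k' < i" "i \<le> Suc j" for i k'
    using lbp_pairing_orthogonal inv that by blast
  \<comment> \<open>For \<open>k = 0\<close> and \<open>k = j\<close> the identity is the definition of \<open>a\<^sub>j\<close>, resp. \<open>b\<^sub>j\<close>.\<close>
  consider "j = 0" | "k = 0" "0 < j" | "0 < k" "k < j" | "0 < k" "k = j"
    using \<open>k \<le> j\<close> by linarith
  then show ?thesis
  proof cases
    case 1
    have "bn m 0 * m 0 = m 1"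
      using H[of 0] by (simp add: Hn_0 bn_def mult.assoc)
    then show ?thesis
      using 1 \<open>k \<le> j\<close> orth[of 0 1] lbp_pairing_minus_one[of m 0] lbp_pairing_self[of m 0]
      by (simp add: Hn_0 taun_0)
  next
    case 2
    have "an m j * taun m (j - 1) = - taun m j"
      using 2 tau[of "j - 1"] by (simp add: an_def mult.assoc)
    then show ?thesis
      using 2 orth[of 0 j] orth[of 0 "Suc j"] by (simp add: lbp_pairing_minus_one)
  next
    case 3
    then have "lbp_pairing m i (int k - 1) = 0" if "i \<in> {j - 1, j}" for i
      using orth[of "k - 1" i] that by (auto simp: of_nat_diff)
    then show ?thesis
      using 3 orth[of k j] orth[of k "Suc j"] by simp
  next
    case 4
    have "lbp_pairing m j (int j - 1) = 0"
      using 4 orth[of "j - 1" j] by (simp add: of_nat_diff)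
    moreover have "lbp_pairing m (j - 1) (int j - 1) = Hn m (j - 1)"
      using 4 lbp_pairing_self[of m "j - 1"] by (simp add: of_nat_diff)
    moreover have "an m j * Hn m (j - 1) = bn m j * Hn m j"
      using 4 H[of j] by (simp add: bn_def mult.assoc)
    ultimately show ?thesis
      using 4 orth[of j "Suc j"] by (simp add: lbp_pairing_self)
  qed
qed

lemma lbp_recurrence:
  fixes m :: "int \<Rightarrow> 'a::division_ring"
  assumes reg: "lbp_regular m (Suc j)"
  shows "lbp_coeff m j (i - 1) + an m j * lbp_coeff m (j - 1) (i - 1)
       = lbp_coeff m (Suc j) i + bn m j * lbp_coeff m j i"
proof -
  define X where "X i = lbp_coeff m j (i - 1) + an m j * lbp_coeff m (j - 1) (i - 1)
       - (lbp_coeff m (Suc j) i + bn m j * lbp_coeff m j i)" for i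
  define w where "w = int j + 1"
  have X_outside: "X i = 0" if outside: "i < 0 \<or> i \<ge> int (Suc j)" for i
  proof -
    have top: "an m j * lbp_coeff m (j - 1) (int j) = 0"
      by (cases j) (simp_all add: lbp_coeff_eq_0)
    consider "i < 0" | "i = int j + 1" | "i > int j + 1"
      using outside by arith
    then show ?thesis
      by cases (use top in \<open>simp_all add: X_def lbp_coeff_eq_0\<close>)
  qed
  have shift: "moment_pairing m w (\<lambda>i. lbp_coeff m p (i - 1)) k = lbp_pairing m p (k - 1)"
    if "p \<le> j" for p k
    using that by (subst moment_pairing_times_lambda)
      (simp_all add: w_def lbp_coeff_eq_0 moment_pairing_lbp)
  have "moment_pairing m w X (int k) = 0" if "k < Suc j" for k
  proof -
    have "moment_pairing m w X (int k)
        = lbp_pairing m j (int k - 1) + an m j * lbp_pairing m (j - 1) (int k - 1)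
          - (lbp_pairing m (Suc j) (int k) + bn m j * lbp_pairing m j (int k))"
      unfolding X_def moment_pairing_diff moment_pairing_add moment_pairing_scale
        shift[OF order_refl] shift[OF diff_le_self]
      by (simp add: w_def moment_pairing_lbp)
    also have "\<dots> = 0"
      using lbp_pairing_recurrence[OF reg] that by simp
    finally show ?thesis .
  qed
  then have "X i = 0"
    using moment_pairing_orthogonal_imp_zero[of "Suc j" m X w] reg X_outside
    by (simp add: lbp_regular_def w_def)
  then show ?thesis
    by (simp add: X_def)
qed

locale moment_flow =
  fixes D :: "'a::division_ring \<Rightarrow> 'a" and m :: "int \<Rightarrow> 'a" and \<alpha>0 \<alpha>1 \<alpha>2 :: 'a
  assumes derivation: "derivation D"
    and central: "\<And>x. \<alpha>0 * x = x * \<alpha>0" "\<And>x. \<alpha>1 * x = x * \<alpha>1" "\<And>x. \<alpha>2 * x = x * \<alpha>2"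
    and D_moment: "\<And>j. D (m j) = \<alpha>0 * of_int j * m j + \<alpha>1 * m (j + 1) + \<alpha>2 * m (j - 1)"
begin

lemma D_add: "D (x + y) = D x + D y"
  using derivation unfolding derivation_def by blast

lemma D_mult: "D (x * y) = D x * y + x * D y"
  using derivation unfolding derivation_def by blast

lemma D_zero [simp]: "D 0 = 0"
  using D_add[of 0 0] by simp

lemma D_one [simp]: "D 1 = 0"
  using D_mult[of 1 1] by simp

lemma D_minus: "D (- x) = - D x"
  using D_add[of x "- x"] by (simp add: eq_neg_iff_add_eq_0 add.commute)

lemma D_sum: "D (sum f A) = (\<Sum>i\<in>A. D (f i))"
  by (induction A rule: infinite_finite_induct) (simp_all add: D_add)

lemma central_commute:
  "x * \<alpha>0 = \<alpha>0 * x" "x * \<alpha>1 = \<alpha>1 * x" "x * \<alpha>2 = \<alpha>2 * x"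
  "x * (\<alpha>0 * y) = \<alpha>0 * (x * y)" "x * (\<alpha>1 * y) = \<alpha>1 * (x * y)" "x * (\<alpha>2 * y) = \<alpha>2 * (x * y)"
  by (metis central mult.assoc)+

lemma D_moment_pairing:
  "D (moment_pairing m w f k) = moment_pairing m w (\<lambda>i. D (f i)) k
     + \<alpha>0 * (moment_pairing m w (\<lambda>i. of_int i * f i) k - of_int k * moment_pairing m w f k)
     + \<alpha>1 * moment_pairing m w f (k - 1) + \<alpha>2 * moment_pairing m w f (k + 1)"
proof -
  have "D (f i * m (i - k)) = D (f i) * m (i - k)
      + \<alpha>0 * (of_int i * f i * m (i - k) - of_int k * (f i * m (i - k)))
      + \<alpha>1 * (f i * m (i - (k - 1))) + \<alpha>2 * (f i * m (i - (k + 1)))" for i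
  proof -
    have "f i * (\<alpha>0 * of_int (i - k) * m (i - k)) = \<alpha>0 * (of_int (i - k) * f i * m (i - k))"
      by (metis central_commute(4) mult.assoc mult_of_int_commute)
    moreover have "i - k + 1 = i - (k - 1)" "i - k - 1 = i - (k + 1)"
      by simp_all
    ultimately show ?thesis
      unfolding D_mult D_moment by (simp add: algebra_simps central_commute)
  qed
  then show ?thesis
    unfolding moment_pairing_def D_sum
    by (simp add: sum.distrib sum_subtractf sum_distrib_left mult.assoc right_diff_distrib)
qed

text \<open>\<open>lbp_velocity j i\<close> is the coefficient of \<open>\<lambda>\<^sup>i\<close> in the time derivative of \<open>P\<^sub>j\<close>, taken at
  fixed \<open>\<lambda>\<close>; the term \<open>-\<alpha>0 i\<close> accounts for the motion \<open>d\<lambda>/dt = \<alpha>0 \<lambda>\<close> of the spectral parameter.\<close>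

definition lbp_velocity :: "nat \<Rightarrow> int \<Rightarrow> 'a" where
  "lbp_velocity j i =
     (\<alpha>0 * (of_nat j - of_int i) + \<alpha>1 * (bn m j - an m j) + \<alpha>2 * inverse (bn m j)) * lbp_coeff m j i
     + \<alpha>1 * (lbp_coeff m (Suc j) i - lbp_coeff m j (i - 1))
     - \<alpha>2 * (inverse (bn m j) * lbp_coeff m (Suc j) (i + 1) + lbp_coeff m j (i + 1))"

lemma D_lbp_pairing_residual:
  "D (lbp_pairing m j k)
   = moment_pairing m (int j + 1) (\<lambda>i. D (lbp_coeff m j i) - lbp_velocity j i) k
     + (\<alpha>0 * (of_nat j - of_int k) + \<alpha>1 * (bn m j - an m j) + \<alpha>2 * inverse (bn m j))
       * lbp_pairing m j k
     + \<alpha>1 * lbp_pairing m (Suc j) k - \<alpha>2 * (inverse (bn m j) * lbp_pairing m (Suc j) (k + 1))"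
proof -
  define w where "w = int j + 1"
  define P where "P = lbp_coeff m j"
  define Q where "Q = lbp_coeff m (Suc j)"
  define e where "e = \<alpha>1 * (bn m j - an m j) + \<alpha>2 * inverse (bn m j)"
  define g where "g = inverse (bn m j)"
  have velocity: "lbp_velocity j = (\<lambda>i. (\<alpha>0 * of_nat j + e) * P i - \<alpha>0 * (of_int i * P i)
      + \<alpha>1 * Q i - \<alpha>1 * P (i - 1) - \<alpha>2 * (g * Q (i + 1)) - \<alpha>2 * P (i + 1))"
    unfolding lbp_velocity_def P_def Q_def e_def g_def by (simp add: fun_eq_iff algebra_simps)
  have pair_P: "moment_pairing m w P k' = lbp_pairing m j k'"
    and pair_Q: "moment_pairing m w Q k' = lbp_pairing m (Suc j) k'" for k'
    by (simp_all add: P_def Q_def w_def moment_pairing_lbp)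
  have shifts: "moment_pairing m w (\<lambda>i. P (i - 1)) k = moment_pairing m w P (k - 1)"
    "moment_pairing m w (\<lambda>i. P (i + 1)) k = moment_pairing m w P (k + 1)"
    "moment_pairing m w (\<lambda>i. Q (i + 1)) k = moment_pairing m w Q (k + 1)"
    by (simp_all add: moment_pairing_times_lambda moment_pairing_times_inverse_lambda
        P_def Q_def w_def lbp_coeff_eq_0)
  have residual: "moment_pairing m w (\<lambda>i. D (P i) - lbp_velocity j i) k
      = moment_pairing m w (\<lambda>i. D (P i)) k - ((\<alpha>0 * of_nat j + e) * moment_pairing m w P k
        - \<alpha>0 * moment_pairing m w (\<lambda>i. of_int i * P i) k + \<alpha>1 * moment_pairing m w Q k
        - \<alpha>1 * moment_pairing m w P (k - 1) - \<alpha>2 * (g * moment_pairing m w Q (k + 1))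
        - \<alpha>2 * moment_pairing m w P (k + 1))"
    unfolding velocity
    by (simp only: moment_pairing_diff moment_pairing_add moment_pairing_scale shifts)
  have "D (moment_pairing m w P k)
      = moment_pairing m w (\<lambda>i. D (P i) - lbp_velocity j i) k
        + (\<alpha>0 * (of_nat j - of_int k) + e) * moment_pairing m w P k
        + \<alpha>1 * moment_pairing m w Q k - \<alpha>2 * (g * moment_pairing m w Q (k + 1))"
    unfolding residual D_moment_pairing by (simp add: algebra_simps)
  then show ?thesis
    unfolding pair_P pair_Q by (simp add: P_def w_def e_def g_def)
qed

lemma lbp_evolution:
  assumes reg: "lbp_regular m (Suc j)"
  shows "D (lbp_coeff m j i) = lbp_velocity j i"
proof -
  define R where "R = (\<lambda>i. D (lbp_coeff m j i) - lbp_velocity j i)"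
  have R_outside: "R i = 0" if outside: "i < 0 \<or> i \<ge> int j" for i
  proof -
    consider "i < -1" | "i = -1" | "i = int j" | "i = int j + 1" | "i > int j + 1"
      using outside by arith
    then show ?thesis
    proof cases
      case 2
      have "lbp_coeff m (Suc j) 0 = - (bn m j * lbp_coeff m j 0)"
        using lbp_recurrence[OF reg, of 0] by (simp add: lbp_coeff_eq_0 eq_neg_iff_add_eq_0)
      moreover have "bn m j \<noteq> 0"
        by (rule bn_nonzero, rule lbp_regular_mono[OF reg]) simp
      ultimately have "inverse (bn m j) * lbp_coeff m (Suc j) 0 + lbp_coeff m j 0 = 0"
        by (simp add: inverse_mult_cancel_left)
      with 2 show ?thesis
        by (simp add: R_def lbp_velocity_def lbp_coeff_eq_0 distrib_left[symmetric])
    next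
      case 3
      have "lbp_coeff m j (int j - 1) + an m j * lbp_coeff m (j - 1) (int j - 1)
          = lbp_coeff m (Suc j) (int j) + bn m j"
        using lbp_recurrence[OF reg, of "int j"] by simp
      moreover have "an m j * lbp_coeff m (j - 1) (int j - 1) = an m j"
        by (cases j) (simp_all add: lbp_coeff_def)
      ultimately have "lbp_coeff m j (int j - 1) + an m j = lbp_coeff m (Suc j) (int j) + bn m j"
        by metis
      then have "lbp_velocity j (int j) = 0"
        unfolding lbp_velocity_def by (simp add: lbp_coeff_eq_0 algebra_simps flip: distrib_left)
      with 3 show ?thesis
        by (simp add: R_def)
    qed (simp_all add: R_def lbp_velocity_def lbp_coeff_eq_0)
  qed
  have "moment_pairing m (int j + 1) R (int k) = 0" if "k < j" for k
  proof -
    have "lbp_pairing m j (int k) = 0" "lbp_pairing m (Suc j) (int k) = 0"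
      "lbp_pairing m (Suc j) (int (Suc k)) = 0"
      using lbp_pairing_orthogonal[of j m k] lbp_pairing_orthogonal[of "Suc j" m k]
        lbp_pairing_orthogonal[of "Suc j" m "Suc k"] reg that
      by (auto simp: lbp_regular_def)
    then show ?thesis
      using D_lbp_pairing_residual[of j "int k"] by (simp add: R_def add.commute)
  qed
  then have "R i = 0"
    using moment_pairing_orthogonal_imp_zero[of j m R "int j + 1"] reg R_outside
    by (simp add: lbp_regular_def)
  then show ?thesis
    by (simp add: R_def)
qed

lemma D_lbp_pairing:
  assumes "lbp_regular m (Suc j)"
  shows "D (lbp_pairing m j k)
    = (\<alpha>0 * (of_nat j - of_int k) + \<alpha>1 * (bn m j - an m j) + \<alpha>2 * inverse (bn m j))
        * lbp_pairing m j k
      + \<alpha>1 * lbp_pairing m (Suc j) k - \<alpha>2 * (inverse (bn m j) * lbp_pairing m (Suc j) (k + 1))"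
  using D_lbp_pairing_residual[of j k] lbp_evolution[OF assms] by simp

lemma D_taun:
  assumes reg: "lbp_regular m (Suc j)"
  shows "D (taun m j)
    = (\<alpha>0 * of_nat (Suc j) + \<alpha>1 * (bn m j - an m j - an m (Suc j)) + \<alpha>2 * inverse (bn m j)) * taun m j"
proof -
  have "lbp_pairing m (Suc j) 0 = 0"
    using lbp_pairing_orthogonal[of "Suc j" m 0] reg by (simp add: lbp_regular_def)
  moreover have "taun m (Suc j) = - (an m (Suc j) * taun m j)"
    using reg by (simp add: lbp_regular_def an_def mult.assoc)
  ultimately show ?thesis
    using D_lbp_pairing[OF reg, of "-1"] by (simp add: lbp_pairing_minus_one algebra_simps)
qed

lemma D_Hn:
  assumes reg: "lbp_regular m (Suc j)"
  shows "D (Hn m j)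
    = (\<alpha>1 * (bn m j - an m j) + \<alpha>2 * inverse (bn m j)) * Hn m j
      - \<alpha>2 * (inverse (bn m j) * Hn m (Suc j))"
proof -
  have "lbp_pairing m (Suc j) (int j) = 0"
    using lbp_pairing_orthogonal[of "Suc j" m j] reg by (simp add: lbp_regular_def)
  moreover have "lbp_pairing m (Suc j) (int j + 1) = Hn m (Suc j)"
    using lbp_pairing_self[of m "Suc j"] by (simp add: add.commute)
  ultimately show ?thesis
    using D_lbp_pairing[OF reg, of "int j"] by (simp add: lbp_pairing_self)
qed

lemma D_right_quotient:
  assumes "x * v = u" "v \<noteq> 0" "D u = c * u" "D v = c' * v"
  shows "D x = c * x - x * c'"
proof -
  have "D x * v = (c * x - x * c') * v"
    using D_mult[of x v] assms(1,3,4) by (simp add: algebra_simps)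
  with \<open>v \<noteq> 0\<close> show ?thesis
    by simp
qed

lemma D_an:
  assumes reg: "lbp_regular m (Suc n)"
  shows "D (an m n) = \<alpha>0 * an m n
    + \<alpha>1 * (- (an m (n + 1) * an m n) + an m n * an m (n - 1) + bn m n * an m n - an m n * bn m (n - 1))
    + \<alpha>2 * (inverse (bn m n) * an m n - an m n * inverse (bn m (n - 1)))"
proof (cases n)
  case (Suc p)
  have "an m n * taun m p = - taun m n"
    using reg Suc by (simp add: lbp_regular_def an_def mult.assoc)
  moreover have "taun m p \<noteq> 0"
    using reg Suc by (simp add: lbp_regular_def)
  moreover have "D (- taun m n)
      = (\<alpha>0 * of_nat (Suc n) + \<alpha>1 * (bn m n - an m n - an m (Suc n)) + \<alpha>2 * inverse (bn m n)) * - taun m n"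
    using D_taun[OF reg] by (simp add: D_minus)
  moreover have "D (taun m p)
      = (\<alpha>0 * of_nat n + \<alpha>1 * (bn m p - an m p - an m n) + \<alpha>2 * inverse (bn m p)) * taun m p"
    using D_taun[OF lbp_regular_mono[OF reg]] Suc by simp
  ultimately have "D (an m n)
      = (\<alpha>0 * of_nat (Suc n) + \<alpha>1 * (bn m n - an m n - an m (Suc n)) + \<alpha>2 * inverse (bn m n)) * an m n
        - an m n * (\<alpha>0 * of_nat n + \<alpha>1 * (bn m p - an m p - an m n) + \<alpha>2 * inverse (bn m p))"
    by (rule D_right_quotient)
  then show ?thesis
    using Suc by (simp add: algebra_simps central_commute mult_of_nat_commute)
qed simp

lemma Hn_Suc_eq:
  assumes reg: "lbp_regular m (Suc n)"
  shows "Hn m (Suc n) = inverse (bn m (Suc n)) * (an m (Suc n) * Hn m n)"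
proof -
  have "bn m (Suc n) * Hn m (Suc n) = an m (Suc n) * Hn m n"
    using reg by (simp add: lbp_regular_def bn_def mult.assoc)
  moreover have "bn m (Suc n) \<noteq> 0"
    using bn_nonzero[OF reg] .
  ultimately show ?thesis
    by (metis inverse_mult_cancel_left)
qed

lemma D_bn_0:
  assumes reg: "lbp_regular m (Suc 0)"
  shows "D (bn m 0)
    = \<alpha>0 * bn m 0 - \<alpha>1 * (an m (Suc 0) * bn m 0) + \<alpha>2 * (inverse (bn m (Suc 0)) * an m (Suc 0))"
proof -
  have H: "Hn m 0 \<noteq> 0" and b: "bn m 0 \<noteq> 0"
    using reg bn_nonzero[OF lbp_regular_mono[OF reg]] by (simp_all add: lbp_regular_def)
  have tau: "taun m 0 = bn m 0 * Hn m 0"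
    using H by (simp add: bn_def Hn_0 taun_0 mult.assoc)
  have "D (bn m 0) * Hn m 0 = D (taun m 0) - bn m 0 * D (Hn m 0)"
    unfolding tau D_mult by simp
  also have "\<dots> = (\<alpha>0 + \<alpha>1 * (bn m 0 - an m (Suc 0)) + \<alpha>2 * inverse (bn m 0)) * taun m 0
      - bn m 0 * ((\<alpha>1 * bn m 0 + \<alpha>2 * inverse (bn m 0)) * Hn m 0
        - \<alpha>2 * (inverse (bn m 0) * Hn m (Suc 0)))"
    using D_taun[of 0] D_Hn[of 0] reg by simp
  also have "\<dots> = (\<alpha>0 * bn m 0 - \<alpha>1 * (an m (Suc 0) * bn m 0)
      + \<alpha>2 * (inverse (bn m (Suc 0)) * an m (Suc 0))) * Hn m 0"
    using b by (simp add: Hn_Suc_eq[OF reg] tau mult_inverse_cancel_left inverse_mult_cancel_left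
        algebra_simps central_commute)
  finally show ?thesis
    using H by simp
qed

lemma D_bn_pos:
  assumes reg: "lbp_regular m (Suc n)" and "0 < n"
  shows "D (bn m n) = \<alpha>0 * bn m n
    + \<alpha>1 * (bn m n * an m n - an m (n + 1) * bn m n)
    + \<alpha>2 * (inverse (bn m (n + 1)) * an m (n + 1) - an m n * inverse (bn m (n - 1)))"
proof -
  obtain p where n: "n = Suc p"
    using \<open>0 < n\<close> gr0_implies_Suc by blast
  then have "n - 1 = p"
    by simp
  have H: "Hn m n \<noteq> 0" and b: "bn m n \<noteq> 0"
    using reg bn_nonzero[OF lbp_regular_mono[OF reg]] by (simp_all add: lbp_regular_def)
  have aH: "an m n * Hn m p = bn m n * Hn m n"
    using H n by (simp add: bn_def mult.assoc)
  have "D (bn m n) * Hn m n = D (an m n) * Hn m p + an m n * D (Hn m p) - bn m n * D (Hn m n)"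
    using arg_cong[OF aH[symmetric], of D] unfolding D_mult by (simp add: algebra_simps)
  also have "\<dots> = (\<alpha>0 * an m n
      + \<alpha>1 * (- (an m (n + 1) * an m n) + an m n * an m p + bn m n * an m n - an m n * bn m p)
      + \<alpha>2 * (inverse (bn m n) * an m n - an m n * inverse (bn m p))) * Hn m p
    + an m n * ((\<alpha>1 * (bn m p - an m p) + \<alpha>2 * inverse (bn m p)) * Hn m p
      - \<alpha>2 * (inverse (bn m p) * Hn m n))
    - bn m n * ((\<alpha>1 * (bn m n - an m n) + \<alpha>2 * inverse (bn m n)) * Hn m n
      - \<alpha>2 * (inverse (bn m n) * Hn m (Suc n)))"
    using D_an[OF reg] D_Hn[OF reg] D_Hn[OF lbp_regular_mono[OF reg], of p] n \<open>n - 1 = p\<close> by simp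
  also have "\<dots> = (\<alpha>0 * bn m n
      + \<alpha>1 * (bn m n * an m n - an m (n + 1) * bn m n)
      + \<alpha>2 * (inverse (bn m (n + 1)) * an m (n + 1) - an m n * inverse (bn m (n - 1)))) * Hn m n"
    using b \<open>n - 1 = p\<close>
    by (simp add: Hn_Suc_eq[OF reg] aH mult_inverse_cancel_left inverse_mult_cancel_left
        algebra_simps central_commute)
  finally show ?thesis
    using H by simp
qed

lemma D_bn:
  assumes "lbp_regular m (Suc n)"
  shows "D (bn m n) = \<alpha>0 * bn m n
    + \<alpha>1 * (bn m n * an m n - an m (n + 1) * bn m n)
    + \<alpha>2 * (inverse (bn m (n + 1)) * an m (n + 1) - an m n * inverse (bn m (n - 1)))"
  using D_bn_0 D_bn_pos assms by (cases "n = 0") simp_all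

end

theorem theorem3p3:
  fixes D :: "'a::division_ring \<Rightarrow> 'a"
    and m :: "int \<Rightarrow> 'a"
    and \<alpha>0 \<alpha>1 \<alpha>2 :: 'a
    and n :: nat
  assumes der: "derivation D"
    and const: "D \<alpha>0 = 0" "D \<alpha>1 = 0" "D \<alpha>2 = 0"
    and central: "\<forall>x. \<alpha>0 * x = x * \<alpha>0" "\<forall>x. \<alpha>1 * x = x * \<alpha>1" "\<forall>x. \<alpha>2 * x = x * \<alpha>2"
    and \<alpha>0_nz: "\<alpha>0 \<noteq> 0"
    and mom: "\<forall>j::int. D (m j) = \<alpha>0 * of_int j * m j + \<alpha>1 * m (j + 1) + \<alpha>2 * m (j - 1)"
    and inv_Lam: "\<forall>k\<le>n + 1. mat_invertible k (moment_matrix m k)"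
    and inv_tau: "\<forall>k\<le>n + 1. taun m k \<noteq> 0"
    and inv_H: "\<forall>k\<le>n + 1. Hn m k \<noteq> 0"
  shows "D (an m n) = \<alpha>0 * an m n
           + \<alpha>1 * (- (an m (n + 1) * an m n) + an m n * an m (n - 1) + bn m n * an m n - an m n * bn m (n - 1))
           + \<alpha>2 * (inverse (bn m n) * an m n - an m n * inverse (bn m (n - 1)))
       \<and> D (bn m n) = \<alpha>0 * bn m n
           + \<alpha>1 * (bn m n * an m n - an m (n + 1) * bn m n)
           + \<alpha>2 * (inverse (bn m (n + 1)) * an m (n + 1) - an m n * inverse (bn m (n - 1)))"
proof -
  interpret moment_flow D m \<alpha>0 \<alpha>1 \<alpha>2
    using der central mom by unfold_locales auto
  have "lbp_regular m (Suc n)"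
    using inv_Lam inv_tau inv_H by (simp add: lbp_regular_def)
  then show ?thesis
    using D_an D_bn by simp
qed

end
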